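(* Let $f$ satisfy the standing assumptions below, and for $\xi,u_1\in(0,1)$ let $$F_0(\xi,u_1)=\frac{1}{2\sqrt2}\int_{-1}^{1}\frac{f'\!\left(\frac{1+\mu}{2}\xi+\frac{1-\mu}{2}u_1\right)}{\sqrt{1-\mu}}\,d\mu,\qquad U_0(\xi,u_1)=\frac43\xi+\frac23u_1 .$$ Then, for $u_1$ sufficiently close to $1$, the function $\xi\mapsto -F_0(\xi,u_1)/U_0(\xi,u_1)$ on $(0,1)$ (whose minimum over $0<\xi<1$ is considered) has one and only one critical point in $(0,1)$. Furthermore, this critical point tends to $1/4$ as $u_1\to1$.
   Context: Standing assumptions: $f:(0,1)\to\mathbb{R}$ is the inverse of a smooth strictly decreasing function $u_0:\mathbb{R}\to(0,1)$ with $u_0(-\infty)=1$, $u_0(+\infty)=0$; thus $f$ is smooth with $f'<0$, $\lim_{u\to0}f(u)=+\infty$, $\lim_{u\to1}f(u)=-\infty$; moreover $f'''(u)<0$ for $u$ in a neighborhood of $0$ and in a neighborhood of $1$. *)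

theory Defs
  imports "HOL-Analysis.Analysis"
begin

definition smooth_on :: "real set \<Rightarrow> (real \<Rightarrow> real) \<Rightarrow> bool" where
  "smooth_on S g \<longleftrightarrow> (\<forall>n. \<forall>x\<in>S. ((deriv ^^ n) g) differentiable (at x))"

definition F0 :: "(real \<Rightarrow> real) \<Rightarrow> real \<Rightarrow> real \<Rightarrow> real" where
  "F0 f \<xi> u1 = 1 / (2 * sqrt 2) *
     integral {-1..1} (\<lambda>\<mu>. deriv f ((1 + \<mu>) / 2 * \<xi> + (1 - \<mu>) / 2 * u1) / sqrt (1 - \<mu>))"

definition U0 :: "real \<Rightarrow> real \<Rightarrow> real" where
  "U0 \<xi> u1 = 4 / 3 * \<xi> + 2 / 3 * u1"

end

(* The substitution mu = 1 - 2 r^2 removes the singularity of F0: F0(xi,u) = I_0(xi,u), where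
   I_k(xi,u) = int_0^1 (1 - r^2)^k f^(k+1)(xi + r^2 (u - xi)) dr, and differentiating under the
   integral gives d/dxi I_k = I_(k+1). Hence the derivative of -F0/U0 is -H/U0^2 with
   H = U0 I_1 - 4/3 I_0, and dH/dxi = U0 I_2 because the I_1 terms cancel.

   For u close to 1, I_2 < 0 for every xi: f''' is bounded above away from 1, and near 1, where
   f''' < 0, the integrand is dominated by the derivative in r of the second-order Taylor polynomial
   of f at xi + r^2 (u - xi), evaluated at u; this bounds I_2 by a constant plus f(u), which tends
   to -infinity. So H(., u) is strictly decreasing and has at most one zero.

   An integration by parts in r shows that H(xi,u) differs by a bounded amount from
   int_rho^1 w(r) (-f'(xi + r^2 (u - xi))) dr, where the weight w tends to 4/3 - k (1 + 1/r^2) with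
   k = (4 xi + 2)/(6 (1 - xi)), while int_rho^1 -f'(...) grows like -f(u)/2. As k < 2/3 exactly when
   xi < 1/4, for suitable rho the weight is eventually positive on [rho,1] if xi < 1/4 and negative
   if xi > 1/4. Thus H(xi,u) tends to +infinity for xi < 1/4 and to -infinity for xi > 1/4, which
   traps the zero of H(., u) in any neighbourhood of 1/4. *)

theory Submission
  imports Defs
begin

lemma interp_between:
  fixes x u t :: real
  assumes "0 \<le> t" "t \<le> 1"
  shows "min x u \<le> x + t * (u - x)" "x + t * (u - x) \<le> max x u"
proof -
  have "x + t * (u - x) = (1 - t) * x + t * u" by (simp add: algebra_simps)
  moreover have "(1 - t) * min x u + t * min x u \<le> (1 - t) * x + t * u"
    and "(1 - t) * x + t * u \<le> (1 - t) * max x u + t * max x u"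
    using assms by (intro add_mono mult_left_mono; simp)+
  ultimately show "min x u \<le> x + t * (u - x)" "x + t * (u - x) \<le> max x u"
    by (simp_all add: algebra_simps)
qed

lemma sq_interp_in_unit_interval:
  fixes x u r :: real
  assumes "x \<in> {0<..<1}" "u \<in> {0<..<1}" "r \<in> {0..1}"
  shows "x + r^2 * (u - x) \<in> {0<..<1}"
proof -
  have "0 \<le> r^2" "r^2 \<le> 1" using assms(3) by (auto simp: power_le_one)
  from interp_between[OF this, of x u] assms(1,2) show ?thesis by auto
qed

lemma continuous_on_comp_sq_interp:
  fixes g :: "real \<Rightarrow> real"
  assumes "continuous_on {0<..<1} g" "x \<in> {0<..<1}" "u \<in> {0<..<1}"
  shows "continuous_on {0..1} (\<lambda>r. g (x + r^2 * (u - x)))"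
  by (rule continuous_on_compose2[OF assms(1)])
     (use sq_interp_in_unit_interval[OF assms(2,3)] in \<open>auto intro!: continuous_intros\<close>)

lemma continuous_on_comp_sq_interp_prod:
  fixes g :: "real \<Rightarrow> real"
  assumes "continuous_on {0<..<1} g" "u \<in> {0<..<1}"
  shows "continuous_on ({0<..<1} \<times> {0..1}) (\<lambda>(x, r). g (x + r^2 * (u - x)))"
  unfolding case_prod_beta
  by (rule continuous_on_compose2[OF assms(1)])
     (use sq_interp_in_unit_interval assms(2) in \<open>auto intro!: continuous_intros\<close>)

lemma sq_interp_bounds:
  fixes x u r \<rho> :: real
  assumes "0 \<le> r" "r \<le> \<rho>" "x < u" "u < 1"
  shows "x \<le> x + r^2 * (u - x)" "x + r^2 * (u - x) \<le> x + \<rho>^2 * (1 - x)"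
proof -
  have "r^2 \<le> \<rho>^2" using assms by (intro power_mono) auto
  then have "r^2 * (u - x) \<le> \<rho>^2 * (1 - x)"
    using assms by (intro mult_mono) auto
  then show "x + r^2 * (u - x) \<le> x + \<rho>^2 * (1 - x)" by simp
  show "x \<le> x + r^2 * (u - x)" using assms by simp
qed

lemma head_interval_subset_unit:
  fixes x \<rho> :: real
  assumes "x \<in> {0<..<1}" "0 < \<rho>" "\<rho> < 1"
  shows "{x..x + \<rho>^2 * (1 - x)} \<subseteq> {0<..<1}"
proof -
  have "\<rho>^2 < 1" using assms power_strict_mono[of \<rho> 1 2] by simp
  then have "\<rho>^2 * (1 - x) < 1 - x"
    using assms mult_strict_right_mono[of "\<rho>^2" 1 "1 - x"] by simp
  then have "x + \<rho>^2 * (1 - x) < 1" by linarith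
  then show ?thesis using assms by auto
qed

lemma has_integral_real_antiderivative:
  fixes F F' :: "real \<Rightarrow> real"
  assumes "a \<le> b" "\<And>r. r \<in> {a..b} \<Longrightarrow> (F has_real_derivative F' r) (at r)"
  shows "(F' has_integral (F b - F a)) {a..b}"
  using assms by (intro fundamental_theorem_of_calculus)
    (auto simp: has_real_derivative_iff_has_vector_derivative intro: has_vector_derivative_at_within)

lemma integral_div_sqrt_one_minus:
  fixes g :: "real \<Rightarrow> real"
  assumes cg: "continuous_on {-1..1} g"
  shows "integral {-1..1} (\<lambda>\<mu>. g \<mu> / sqrt (1 - \<mu>)) = 2 * sqrt 2 * integral {0..1} (\<lambda>r. g (1 - 2 * r^2))"
proof -
  define h where "h r = g (1 - 2 * r^2)" for r :: real
  define Q where "Q t = integral {0..t} h" for t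
  define s where "s \<mu> = sqrt ((1 - \<mu>) / 2)" for \<mu> :: real
  define P where "P \<mu> = - 2 * sqrt 2 * Q (s \<mu>)" for \<mu>
  have ch: "continuous_on {0..1} h"
    unfolding h_def
    by (rule continuous_on_compose2[OF cg]) (auto intro!: continuous_intros simp: power_le_one)
  have dQ: "(Q has_real_derivative h t) (at t within {0..1})" if "t \<in> {0..1}" for t
    unfolding Q_def using integral_has_real_derivative[OF ch that] .
  have s_in: "s \<mu> \<in> {0..1}" if "\<mu> \<in> {-1..1}" for \<mu>
    using that unfolding s_def by (auto simp: real_sqrt_le_1_iff)
  have cQ: "continuous_on {0..1} Q"
    using dQ by (meson DERIV_continuous continuous_on_eq_continuous_within)
  have cs: "continuous_on {-1..1} s" unfolding s_def by (intro continuous_intros) simp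
  have cP: "continuous_on {-1..1} P"
    unfolding P_def by (intro continuous_intros continuous_on_compose2[OF cQ cs]) (use s_in in auto)
  have dP: "(P has_vector_derivative (g \<mu> / sqrt (1 - \<mu>))) (at \<mu>)" if \<mu>: "\<mu> \<in> {-1<..<1}" for \<mu>
  proof -
    have "s \<mu> \<in> interior {0..1}" using \<mu> unfolding s_def by (auto simp: real_sqrt_lt_1_iff)
    then have dQ': "(Q has_real_derivative h (s \<mu>)) (at (s \<mu>))"
      using dQ[of "s \<mu>"] interior_subset at_within_interior[of "s \<mu>" "{0..1}"] by auto
    have ds: "(s has_real_derivative - 1 / (4 * s \<mu>)) (at \<mu>)"
      unfolding s_def using \<mu> by (auto intro!: derivative_eq_intros simp: field_simps)
    have "(P has_real_derivative - 2 * sqrt 2 * (h (s \<mu>) * (- 1 / (4 * s \<mu>)))) (at \<mu>)"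
      unfolding P_def by (intro DERIV_cmult DERIV_chain2[OF dQ' ds])
    moreover have "- 2 * sqrt 2 * (h (s \<mu>) * (- 1 / (4 * s \<mu>)))
        = h (s \<mu>) * (- 2 * sqrt 2 * (- 1 / (4 * s \<mu>)))"
      by (simp add: algebra_simps)
    moreover have "h (s \<mu>) = g \<mu>" unfolding h_def s_def using \<mu> by (simp add: field_simps)
    moreover have "- 2 * sqrt 2 * (- 1 / (4 * s \<mu>)) = 1 / sqrt (1 - \<mu>)"
      unfolding s_def using \<mu> by (simp add: real_sqrt_divide field_simps)
    ultimately have "(P has_real_derivative g \<mu> * (1 / sqrt (1 - \<mu>))) (at \<mu>)" by metis
    then show ?thesis by (simp add: has_real_derivative_iff_has_vector_derivative)
  qed
  have "((\<lambda>\<mu>. g \<mu> / sqrt (1 - \<mu>)) has_integral (P 1 - P (-1))) {-1..1}"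
    by (rule fundamental_theorem_of_calculus_interior[OF _ cP dP]) auto
  moreover have "P 1 - P (-1) = 2 * sqrt 2 * integral {0..1} h"
    unfolding P_def Q_def s_def by simp
  ultimately show ?thesis unfolding h_def by (simp add: integral_unique)
qed

lemma has_real_derivative_integral_comp_sq_interp:
  fixes g g' w :: "real \<Rightarrow> real"
  assumes dg: "\<And>y. y \<in> {0<..<1} \<Longrightarrow> (g has_real_derivative g' y) (at y)"
    and cg': "continuous_on {0<..<1} g'" and cw: "continuous_on {0..1} w"
    and x: "x \<in> {0<..<1}" and u: "u \<in> {0<..<1}"
  shows "((\<lambda>x. integral {0..1} (\<lambda>r. w r * g (x + r^2 * (u - x)))) has_real_derivative
           integral {0..1} (\<lambda>r. w r * (1 - r^2) * g' (x + r^2 * (u - x)))) (at x)"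
proof -
  have cg: "continuous_on {0<..<1} g"
    using dg by (meson DERIV_isCont continuous_at_imp_continuous_on)
  have "((\<lambda>x. integral (cbox 0 1) (\<lambda>r. w r * g (x + r^2 * (u - x)))) has_real_derivative
           integral (cbox 0 1) (\<lambda>r. w r * (1 - r^2) * g' (x + r^2 * (u - x)))) (at x within {0<..<1})"
  proof (rule leibniz_rule_field_derivative)
    fix y r :: real assume y: "y \<in> {0<..<1}" and r: "r \<in> cbox 0 1"
    have "((\<lambda>y. w r * g (y + r^2 * (u - y))) has_real_derivative
             w r * (g' (y + r^2 * (u - y)) * (1 - r^2))) (at y)"
      using sq_interp_in_unit_interval[OF y u] r
      by (auto intro!: DERIV_cmult DERIV_chain2[OF dg] derivative_eq_intros)
    then show "((\<lambda>y. w r * g (y + r^2 * (u - y))) has_real_derivative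
             w r * (1 - r^2) * g' (y + r^2 * (u - y))) (at y within {0<..<1})"
      by (auto intro: has_field_derivative_at_within simp: algebra_simps)
  next
    fix y :: real assume "y \<in> {0<..<1}"
    then show "(\<lambda>r. w r * g (y + r^2 * (u - y))) integrable_on cbox 0 1"
      using u by (auto intro!: integrable_continuous_interval continuous_intros cw
          continuous_on_comp_sq_interp[OF cg])
  next
    have "continuous_on ({0<..<1} \<times> {0..1}) (\<lambda>z::real \<times> real. w (snd z))"
      by (rule continuous_on_compose2[OF cw]) (auto intro!: continuous_intros)
    then show "continuous_on ({0<..<1} \<times> cbox 0 1) (\<lambda>(x, r). w r * (1 - r^2) * g' (x + r^2 * (u - x)))"
      using continuous_on_comp_sq_interp_prod[OF cg' u]
      by (auto intro!: continuous_intros simp: case_prod_beta)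
  qed (use x in auto)
  moreover have "at x within {0<..<1} = at x"
    using x by (intro at_within_open) auto
  ultimately show ?thesis by simp
qed

lemma has_real_derivative_U0: "((\<lambda>x. U0 x u) has_real_derivative 4/3) (at x)"
  unfolding U0_def by (auto intro!: derivative_eq_intros)

lemma U0_pos: "x \<in> {0<..<1} \<Longrightarrow> u \<in> {0<..<1} \<Longrightarrow> 0 < U0 x u"
  unfolding U0_def by simp

lemma tendsto_U0_div:
  assumes "x < 1"
  shows "((\<lambda>u. U0 x u / (2 * (u - x))) \<longlongrightarrow> (4 * x + 2) / (6 * (1 - x))) (at_left 1)"
  unfolding U0_def using assms by (auto intro!: tendsto_eq_intros simp: field_simps)

lemma boundary_coeff_bound:
  fixes x u \<rho> :: real
  assumes "0 < x" "(1 + x) / 2 < u" "u < 1" "0 < \<rho>" "\<rho> \<le> 1"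
  shows "\<bar>U0 x u / (2 * (u - x)) * (1 / \<rho> - \<rho>)\<bar> \<le> 2 / ((1 - x) * \<rho>)"
proof -
  define k where "k = U0 x u / (2 * (u - x))"
  have k: "0 \<le> k" "k \<le> 2 / (1 - x)"
    using assms unfolding k_def U0_def by (auto intro!: frac_le)
  have p: "0 \<le> 1 / \<rho> - \<rho>" "1 / \<rho> - \<rho> \<le> 1 / \<rho>"
    using assms by (auto simp: field_simps power2_eq_square intro: mult_le_one)
  have "k * (1 / \<rho> - \<rho>) \<le> 2 / (1 - x) * (1 / \<rho>)"
    using k p assms by (intro mult_mono) auto
  moreover have "0 \<le> k * (1 / \<rho> - \<rho>)" using k p by simp
  ultimately show ?thesis unfolding k_def[symmetric] by simp
qed

locale inverse_profile =
  fixes f :: "real \<Rightarrow> real"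
  assumes smooth: "smooth_on {0<..<1} f"
    and deriv_neg: "\<And>u. 0 < u \<Longrightarrow> u < 1 \<Longrightarrow> deriv f u < 0"
    and tendsto_at_left_1: "filterlim f at_bot (at_left 1)"
    and D3_neg_near_0: "\<exists>\<delta>>0. \<forall>u. 0 < u \<and> u < \<delta> \<longrightarrow> (deriv ^^ 3) f u < 0"
    and D3_neg_near_1: "\<exists>\<delta>>0. \<forall>u. 1 - \<delta> < u \<and> u < 1 \<longrightarrow> (deriv ^^ 3) f u < 0"
begin

abbreviation D :: "nat \<Rightarrow> real \<Rightarrow> real" where
  "D k \<equiv> (deriv ^^ k) f"

lemma has_real_derivative_D:
  assumes "y \<in> {0<..<1}"
  shows "(D k has_real_derivative D (Suc k) y) (at y)"
  using smooth assms unfolding smooth_on_def by (simp add: DERIV_deriv_iff_real_differentiable)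

lemma continuous_on_D: "continuous_on {0<..<1} (D k)"
  using has_real_derivative_D by (meson DERIV_isCont continuous_at_imp_continuous_on)

definition I :: "nat \<Rightarrow> real \<Rightarrow> real \<Rightarrow> real" where
  "I k x u = integral {0..1} (\<lambda>r. (1 - r^2)^k * D (Suc k) (x + r^2 * (u - x)))"

lemma has_real_derivative_I:
  assumes "x \<in> {0<..<1}" "u \<in> {0<..<1}"
  shows "((\<lambda>x. I k x u) has_real_derivative I (Suc k) x u) (at x)"
  using has_real_derivative_integral_comp_sq_interp[OF has_real_derivative_D[of _ "Suc k"]
      continuous_on_D[of "Suc (Suc k)"] _ assms, of "\<lambda>r. (1 - r^2)^k"]
  unfolding I_def by (simp add: continuous_intros mult_ac)

lemma F0_eq_I0:
  assumes x: "x \<in> {0<..<1}" and u: "u \<in> {0<..<1}"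
  shows "F0 f x u = I 0 x u"
proof -
  define p where "p \<mu> = (1 + \<mu>) / 2 * x + (1 - \<mu>) / 2 * u" for \<mu> :: real
  define g where "g \<mu> = deriv f (p \<mu>)" for \<mu>
  have "p \<mu> \<in> {0<..<1}" if "\<mu> \<in> {-1..1}" for \<mu>
  proof -
    have "0 \<le> (1 + \<mu>) / 2" "(1 + \<mu>) / 2 \<le> 1" using that by auto
    from interp_between[OF this, of u x]
    have "min u x \<le> p \<mu>" "p \<mu> \<le> max u x"
      unfolding p_def by (simp_all add: field_simps)
    moreover have "0 < min u x" "max u x < 1" using x u by auto
    ultimately show ?thesis by (metis greaterThanLessThan_iff le_less_trans less_le_trans)
  qed
  moreover have "continuous_on {-1..1} p"
    unfolding p_def by (intro continuous_intros) auto
  ultimately have "continuous_on {-1..1} g"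
    unfolding g_def by (intro continuous_on_compose2[OF continuous_on_D[of 1, simplified]]) auto
  have "F0 f x u = 1 / (2 * sqrt 2) * integral {-1..1} (\<lambda>\<mu>. g \<mu> / sqrt (1 - \<mu>))"
    unfolding F0_def g_def p_def ..
  also have "\<dots> = integral {0..1} (\<lambda>r. g (1 - 2 * r^2))"
    using integral_div_sqrt_one_minus[OF \<open>continuous_on {-1..1} g\<close>] by simp
  also have "\<dots> = I 0 x u"
  proof -
    have "(1 + (1 - 2 * r^2)) / 2 * x + (1 - (1 - 2 * r^2)) / 2 * u = x + r^2 * (u - x)" for r :: real
      by (simp add: field_simps)
    then show ?thesis unfolding I_def g_def p_def by simp
  qed
  finally show ?thesis .
qed

definition H :: "real \<Rightarrow> real \<Rightarrow> real" where
  "H x u = U0 x u * I 1 x u - 4/3 * I 0 x u"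

section \<open>Critical points of -F0/U0 as zeros of H\<close>

lemma has_real_derivative_H:
  assumes "x \<in> {0<..<1}" "u \<in> {0<..<1}"
  shows "((\<lambda>x. H x u) has_real_derivative U0 x u * I 2 x u) (at x)"
proof -
  have "((\<lambda>x. H x u) has_real_derivative 4/3 * I 1 x u + U0 x u * I 2 x u - 4/3 * I 1 x u) (at x)"
    unfolding H_def U0_def
    by (auto intro!: derivative_eq_intros has_real_derivative_I[OF assms] simp: numeral_2_eq_2)
  then show ?thesis by simp
qed

lemma has_real_derivative_neg_F0_div_U0:
  assumes x: "x \<in> {0<..<1}" and u: "u \<in> {0<..<1}"
  shows "((\<lambda>\<xi>. - F0 f \<xi> u / U0 \<xi> u) has_real_derivative - H x u / (U0 x u)^2) (at x)"
proof -
  have "((\<lambda>\<xi>. - I 0 \<xi> u / U0 \<xi> u) has_real_derivative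
          (- I 1 x u * U0 x u - (- I 0 x u) * (4/3)) / (U0 x u * U0 x u)) (at x)"
    by (intro DERIV_divide DERIV_minus has_real_derivative_I[OF x u, of 0, unfolded One_nat_def[symmetric]]
        has_real_derivative_U0) (use U0_pos[OF x u] in auto)
  moreover have "(- I 1 x u * U0 x u - (- I 0 x u) * (4/3)) / (U0 x u * U0 x u) = - H x u / (U0 x u)^2"
    unfolding H_def by (simp add: power2_eq_square algebra_simps)
  ultimately have "((\<lambda>\<xi>. - I 0 \<xi> u / U0 \<xi> u) has_real_derivative - H x u / (U0 x u)^2) (at x)"
    by metis
  then show ?thesis
    by (rule has_field_derivative_transform_within_open[of _ _ _ "{0<..<1}"]) (use x u F0_eq_I0 in auto)
qed

lemma critical_point_iff_H_zero:
  assumes "x \<in> {0<..<1}" "u \<in> {0<..<1}"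
  shows "((\<lambda>\<xi>. - F0 f \<xi> u / U0 \<xi> u) has_real_derivative 0) (at x) \<longleftrightarrow> H x u = 0"
  using has_real_derivative_neg_F0_div_U0[OF assms] U0_pos[OF assms] DERIV_unique by fastforce

section \<open>Negativity of I 2 as u tends to 1\<close>

lemma continuous_on_I_integrand:
  assumes "x \<in> {0<..<1}" "u \<in> {0<..<1}"
  shows "continuous_on {0..1} (\<lambda>r. (1 - r^2)^k * D (Suc k) (x + r^2 * (u - x)))"
  by (intro continuous_intros continuous_on_comp_sq_interp[OF continuous_on_D assms])

lemma D3_bounded_above:
  assumes "c < 1"
  obtains M where "0 \<le> M" "\<And>z. 0 < z \<Longrightarrow> z \<le> c \<Longrightarrow> D 3 z \<le> M"
proof -
  obtain \<delta> where \<delta>: "\<delta> > 0" "\<And>z. 0 < z \<Longrightarrow> z < \<delta> \<Longrightarrow> D 3 z < 0"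
    using D3_neg_near_0 by blast
  have "continuous_on {\<delta>/2..c} (D 3)"
    using \<delta>(1) assms by (intro continuous_on_subset[OF continuous_on_D]) auto
  then obtain M where M: "0 \<le> M" "\<And>z. z \<in> {\<delta>/2..c} \<Longrightarrow> norm (D 3 z) \<le> M"
    using continuous_on_compact_bound[OF compact_Icc] by metis
  show thesis
  proof (rule that[OF M(1)])
    fix z assume "0 < z" "z \<le> c"
    then show "D 3 z \<le> M"
      using \<delta>(2)[of z] M(1) M(2)[of z] by (cases "z < \<delta>/2") auto
  qed
qed

lemma I2_head_le:
  assumes x: "x \<in> {0<..<1}" and u: "u \<in> {0<..<1}" and \<rho>: "0 \<le> \<rho>" "\<rho> \<le> 1"
    and M: "0 \<le> M" "\<And>r. r \<in> {0..\<rho>} \<Longrightarrow> D 3 (x + r^2 * (u - x)) \<le> M"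
  shows "integral {0..\<rho>} (\<lambda>r. (1 - r^2)^2 * D 3 (x + r^2 * (u - x))) \<le> M"
proof -
  have "integral {0..\<rho>} (\<lambda>r. (1 - r^2)^2 * D 3 (x + r^2 * (u - x))) \<le> integral {0..\<rho>} (\<lambda>_. M)"
  proof (rule integral_le)
    show "(\<lambda>r. (1 - r^2)^2 * D 3 (x + r^2 * (u - x))) integrable_on {0..\<rho>}"
      using continuous_on_I_integrand[OF x u, of 2] \<rho>
      by (intro integrable_continuous_interval) (simp add: continuous_on_subset)
  next
    fix r assume r: "r \<in> {0..\<rho>}"
    then have w: "0 \<le> (1 - r^2)^2" "(1 - r^2)^2 \<le> 1"
      using \<rho> by (auto simp: power_le_one abs_square_le_1)
    then have "(1 - r^2)^2 * D 3 (x + r^2 * (u - x)) \<le> (1 - r^2)^2 * M"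
      using M(2)[OF r] by (intro mult_left_mono)
    also have "\<dots> \<le> M"
      using w M(1) by (simp add: mult_left_le_one_le)
    finally show "(1 - r^2)^2 * D 3 (x + r^2 * (u - x)) \<le> M" .
  qed (rule integrable_const_ivl)
  also have "\<dots> \<le> M" using \<rho> M(1) by (simp add: mult_left_le_one_le)
  finally show ?thesis .
qed

definition taylor2 :: "real \<Rightarrow> real \<Rightarrow> real" where
  "taylor2 u a = f a + (u - a) * D 1 a + (u - a)^2 / 2 * D 2 a"

lemma has_real_derivative_taylor2:
  assumes "a \<in> {0<..<1}"
  shows "(taylor2 u has_real_derivative (u - a)^2 / 2 * D 3 a) (at a)"
proof -
  have "(taylor2 u has_real_derivative D 1 a + (- D 1 a + (u - a) * D 2 a)
          + (- (2 * (u - a)) / 2 * D 2 a + (u - a)^2 / 2 * D 3 a)) (at a)"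
    unfolding taylor2_def using has_real_derivative_D[OF assms, of 0] has_real_derivative_D[OF assms, of 1]
      has_real_derivative_D[OF assms, of 2]
    by (auto intro!: derivative_eq_intros simp: numeral_2_eq_2 numeral_3_eq_3)
  then show ?thesis by (simp add: field_simps)
qed

lemma has_integral_taylor2_sq_interp:
  assumes x: "x \<in> {0<..<1}" and xu: "x < u" "u < 1" and \<rho>: "0 \<le> \<rho>" "\<rho> \<le> 1"
  shows "((\<lambda>r. r * (u - x)^3 * ((1 - r^2)^2 * D 3 (x + r^2 * (u - x))))
           has_integral (f u - taylor2 u (x + \<rho>^2 * (u - x)))) {\<rho>..1}"
proof -
  define a where "a r = x + r^2 * (u - x)" for r
  have "((\<lambda>r. r * (u - x)^3 * ((1 - r^2)^2 * D 3 (a r))) has_integral (taylor2 u (a 1) - taylor2 u (a \<rho>))) {\<rho>..1}"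
  proof (rule has_integral_real_antiderivative)
    fix r assume r: "r \<in> {\<rho>..1}"
    have "a r \<in> {0<..<1}"
      unfolding a_def using sq_interp_in_unit_interval[OF x, of u r] x xu \<rho> r by auto
    moreover have "(a has_real_derivative 2 * r * (u - x)) (at r)"
      unfolding a_def by (auto intro!: derivative_eq_intros)
    ultimately have d: "((taylor2 u \<circ> a) has_real_derivative (u - a r)^2 / 2 * D 3 (a r) * (2 * r * (u - x))) (at r)"
      using DERIV_chain[of "taylor2 u" _ a r] has_real_derivative_taylor2 by blast
    have "u - a r = (1 - r^2) * (u - x)"
      unfolding a_def by (simp add: algebra_simps)
    then have E: "(u - a r)^2 / 2 * D 3 (a r) * (2 * r * (u - x)) = r * (u - x)^3 * ((1 - r^2)^2 * D 3 (a r))"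
      by (simp add: power_mult_distrib power3_eq_cube power2_eq_square)
    show "((\<lambda>r. taylor2 u (a r)) has_real_derivative r * (u - x)^3 * ((1 - r^2)^2 * D 3 (a r))) (at r)"
      using d unfolding E comp_def .
  qed (use \<rho> in simp)
  moreover have "taylor2 u (a 1) = f u" unfolding taylor2_def a_def by simp
  ultimately show ?thesis unfolding a_def by simp
qed

lemma I2_tail_le:
  fixes x u \<rho> :: real
  defines "c \<equiv> x + \<rho>^2 * (u - x)"
  assumes x: "x \<in> {0<..<1}" and xu: "x < u" "u < 1" and \<rho>: "0 \<le> \<rho>" "\<rho> \<le> 1"
    and neg: "\<And>z. c \<le> z \<Longrightarrow> z < 1 \<Longrightarrow> D 3 z \<le> 0"
  shows "integral {\<rho>..1} (\<lambda>r. (1 - r^2)^2 * D 3 (x + r^2 * (u - x))) \<le> f u - taylor2 u c"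
proof (rule has_integral_le)
  show "((\<lambda>r. (1 - r^2)^2 * D 3 (x + r^2 * (u - x))) has_integral
          integral {\<rho>..1} (\<lambda>r. (1 - r^2)^2 * D 3 (x + r^2 * (u - x)))) {\<rho>..1}"
    using continuous_on_I_integrand[OF x, of u 2] \<rho> x xu
    by (intro integrable_integral integrable_continuous_interval) (simp add: continuous_on_subset)
  show "((\<lambda>r. r * (u - x)^3 * ((1 - r^2)^2 * D 3 (x + r^2 * (u - x)))) has_integral (f u - taylor2 u c)) {\<rho>..1}"
    unfolding c_def by (rule has_integral_taylor2_sq_interp[OF x xu \<rho>])
next
  fix r assume r: "r \<in> {\<rho>..1}"
  have "c \<le> x + r^2 * (u - x)"
    unfolding c_def using r \<rho> xu by (auto intro!: mult_right_mono power_mono)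
  then have "0 \<le> - ((1 - r^2)^2 * D 3 (x + r^2 * (u - x)))"
    using neg sq_interp_in_unit_interval[OF x, of u r] x xu r \<rho> by (simp add: mult_nonneg_nonpos)
  moreover have "r * (u - x)^3 \<le> 1"
    using r \<rho> xu x by (auto simp: power_le_one mult_le_one)
  ultimately show "(1 - r^2)^2 * D 3 (x + r^2 * (u - x)) \<le> r * (u - x)^3 * ((1 - r^2)^2 * D 3 (x + r^2 * (u - x)))"
    using mult_right_mono[of "r * (u - x)^3" 1 "- ((1 - r^2)^2 * D 3 (x + r^2 * (u - x)))"] by simp
qed

lemma I2_upper_bound:
  assumes x: "x \<in> {0<..<1}" and xcu: "x < c" "c < u" "u < 1"
    and M: "0 \<le> M" "\<And>z. 0 < z \<Longrightarrow> z \<le> c \<Longrightarrow> D 3 z \<le> M"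
    and neg: "\<And>z. c \<le> z \<Longrightarrow> z < 1 \<Longrightarrow> D 3 z \<le> 0"
  shows "I 2 x u \<le> M + f u - taylor2 u c"
proof -
  define \<rho> where "\<rho> = sqrt ((c - x) / (u - x))"
  have \<rho>: "0 \<le> \<rho>" "\<rho> \<le> 1" and c_eq: "x + \<rho>^2 * (u - x) = c"
    unfolding \<rho>_def using xcu by (auto simp: real_sqrt_le_1_iff)
  have u: "u \<in> {0<..<1}" using x xcu by auto
  have "I 2 x u = integral {0..\<rho>} (\<lambda>r. (1 - r^2)^2 * D 3 (x + r^2 * (u - x)))
                 + integral {\<rho>..1} (\<lambda>r. (1 - r^2)^2 * D 3 (x + r^2 * (u - x)))"
    unfolding I_def using \<rho> continuous_on_I_integrand[OF x u, of 2]
    by (simp add: Henstock_Kurzweil_Integration.integral_combine integrable_continuous_interval)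
  also have "\<dots> \<le> M + (f u - taylor2 u c)"
  proof (rule add_mono)
    show "integral {0..\<rho>} (\<lambda>r. (1 - r^2)^2 * D 3 (x + r^2 * (u - x))) \<le> M"
    proof (rule I2_head_le[OF x u \<rho> M(1)])
      fix r assume "r \<in> {0..\<rho>}"
      then have "r^2 * (u - x) \<le> \<rho>^2 * (u - x)"
        using xcu by (intro mult_right_mono power_mono) auto
      then show "D 3 (x + r^2 * (u - x)) \<le> M"
        using M(2) c_eq sq_interp_in_unit_interval[OF x u, of r] \<open>r \<in> {0..\<rho>}\<close> \<rho> by auto
    qed
    show "integral {\<rho>..1} (\<lambda>r. (1 - r^2)^2 * D 3 (x + r^2 * (u - x))) \<le> f u - taylor2 u c"
      using I2_tail_le[OF x _ _ \<rho>, of u] neg xcu unfolding c_eq by simp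
  qed
  finally show ?thesis by simp
qed

lemma I2_neg_if_D3_neg_above:
  assumes x: "x \<in> {0<..<1}" and u: "u \<in> {0<..<1}" and cx: "c \<le> x" "c \<le> u"
    and neg: "\<And>z. c \<le> z \<Longrightarrow> z < 1 \<Longrightarrow> D 3 z < 0"
  shows "I 2 x u < 0"
proof -
  have "integral {0..1} (\<lambda>r. (1 - r^2)^2 * D 3 (x + r^2 * (u - x))) < integral {0..1} (\<lambda>_::real. 0)"
  proof (rule integral_less_real)
    show "continuous_on {0..1} (\<lambda>r. (1 - r^2)^2 * D 3 (x + r^2 * (u - x)))"
      using continuous_on_I_integrand[OF x u, of 2] by simp
  next
    fix r :: real assume r: "r \<in> {0<..<1}"
    then have "min x u \<le> x + r^2 * (u - x)"
      using interp_between[of "r^2" x u] by (simp add: power_le_one)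
    then have "D 3 (x + r^2 * (u - x)) < 0"
      using neg sq_interp_in_unit_interval[OF x u, of r] r cx by auto
    moreover have "r^2 < 1" using r by (simp add: power_less_one_iff)
    then have "0 < (1 - r^2)^2" by simp
    ultimately show "(1 - r^2)^2 * D 3 (x + r^2 * (u - x)) < 0"
      by (simp add: mult_pos_neg)
  qed auto
  then show ?thesis unfolding I_def by simp
qed

lemma I2_eventually_neg: "\<forall>\<^sub>F u in at_left 1. \<forall>x\<in>{0<..<1}. I 2 x u < 0"
proof -
  obtain \<delta> where \<delta>: "\<delta> > 0" "\<And>z. 1 - \<delta> < z \<Longrightarrow> z < 1 \<Longrightarrow> D 3 z < 0"
    using D3_neg_near_1 by blast
  define c where "c = 1 - min \<delta> 1 / 2"
  have c: "0 < c" "c < 1" and neg: "\<And>z. c \<le> z \<Longrightarrow> z < 1 \<Longrightarrow> D 3 z < 0"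
    unfolding c_def using \<delta> by auto
  obtain M where M: "0 \<le> M" "\<And>z. 0 < z \<Longrightarrow> z \<le> c \<Longrightarrow> D 3 z \<le> M"
    using D3_bounded_above[OF c(2)] by blast
  have "\<forall>\<^sub>F u in at_left 1. f u < - (M + \<bar>D 2 c\<bar> / 2 + \<bar>D 1 c\<bar> - f c)"
    using tendsto_at_left_1 by (simp add: filterlim_at_bot_dense)
  moreover have "\<forall>\<^sub>F u in at_left 1. u \<in> {c<..<1}"
    using c by (intro eventually_at_left_real) auto
  ultimately show ?thesis
  proof eventually_elim
    case (elim u)
    show ?case
    proof
      fix x :: real assume x: "x \<in> {0<..<1}"
      show "I 2 x u < 0"
      proof (cases "x < c")
        case True
        have "f c - \<bar>D 1 c\<bar> - \<bar>D 2 c\<bar> / 2 \<le> taylor2 u c"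
        proof -
          have "0 \<le> u - c" "u - c \<le> 1" using elim c by auto
          then have "\<bar>(u - c)^2 / 2 * D 2 c\<bar> \<le> \<bar>D 2 c\<bar> / 2" "\<bar>(u - c) * D 1 c\<bar> \<le> \<bar>D 1 c\<bar>"
            by (auto simp: abs_mult power_le_one mult_left_le_one_le)
          then show ?thesis unfolding taylor2_def by linarith
        qed
        then show ?thesis
          using I2_upper_bound[OF x True _ _ M] elim neg by fastforce
      next
        case False
        then show ?thesis
          using I2_neg_if_D3_neg_above[OF x, of u c] neg elim c by auto
      qed
    qed
  qed
qed

section \<open>Divergence of H as u tends to 1\<close>

lemma H_eq_integral:
  assumes "x \<in> {0<..<1}" "u \<in> {0<..<1}"
  shows "H x u = integral {0..1} (\<lambda>r. U0 x u * (1 - r^2) * D 2 (x + r^2 * (u - x)) - 4/3 * D 1 (x + r^2 * (u - x)))"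
proof -
  have "(\<lambda>r. U0 x u * ((1 - r^2) * D 2 (x + r^2 * (u - x)))) integrable_on {0..1}"
       "(\<lambda>r. 4/3 * D 1 (x + r^2 * (u - x))) integrable_on {0..1}"
    using continuous_on_I_integrand[OF assms, of 1] continuous_on_I_integrand[OF assms, of 0]
    by (auto simp: numeral_2_eq_2 intro!: integrable_continuous_interval continuous_intros)
  from integral_diff[OF this] show ?thesis
    unfolding H_def I_def by (simp add: mult.assoc numeral_2_eq_2)
qed

definition tail_weight :: "real \<Rightarrow> real \<Rightarrow> real \<Rightarrow> real" where
  "tail_weight x u r = 4/3 - U0 x u / (2 * (u - x)) * (1 + 1 / r^2)"

lemma continuous_on_tail_weight:
  assumes "x \<noteq> u" "0 < \<rho>"
  shows "continuous_on {\<rho>..1} (tail_weight x u)"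
  unfolding tail_weight_def using assms by (intro continuous_intros) auto

lemma continuous_on_weighted_tail:
  assumes x: "x \<in> {0<..<1}" and u: "u \<in> {0<..<1}" and \<rho>: "0 \<le> \<rho>" and w: "continuous_on {\<rho>..1} w"
  shows "continuous_on {\<rho>..1} (\<lambda>r. w r * - D 1 (x + r^2 * (u - x)))"
  using continuous_on_comp_sq_interp[OF continuous_on_D x u, of 1] \<rho>
  by (intro continuous_intros w) (simp add: continuous_on_subset)

lemma integral_tail_weight_mono:
  assumes x: "x \<in> {0<..<1}" and u: "u \<in> {0<..<1}" and \<rho>: "0 \<le> \<rho>"
    and vw: "continuous_on {\<rho>..1} v" "continuous_on {\<rho>..1} w" "\<And>r. r \<in> {\<rho>..1} \<Longrightarrow> v r \<le> w r"
  shows "integral {\<rho>..1} (\<lambda>r. v r * - D 1 (x + r^2 * (u - x)))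
           \<le> integral {\<rho>..1} (\<lambda>r. w r * - D 1 (x + r^2 * (u - x)))"
proof (rule integral_le)
  show "(\<lambda>r. v r * - D 1 (x + r^2 * (u - x))) integrable_on {\<rho>..1}"
       "(\<lambda>r. w r * - D 1 (x + r^2 * (u - x))) integrable_on {\<rho>..1}"
    using continuous_on_weighted_tail[OF x u \<rho>] vw by (auto intro: integrable_continuous_interval)
next
  fix r assume r: "r \<in> {\<rho>..1}"
  then have "0 < - D 1 (x + r^2 * (u - x))"
    using deriv_neg sq_interp_in_unit_interval[OF x u, of r] \<rho> by simp
  then show "v r * - D 1 (x + r^2 * (u - x)) \<le> w r * - D 1 (x + r^2 * (u - x))"
    using vw(3)[OF r] by (simp add: mult_right_mono)
qed

lemma has_real_derivative_boundary_term:
  assumes x: "x \<in> {0<..<1}" and xu: "x < u" "u < 1" and r: "0 < r" "r \<le> 1"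
  shows "((\<lambda>r. U0 x u / (2 * (u - x)) * (1 / r - r) * D 1 (x + r^2 * (u - x))) has_real_derivative
           - U0 x u / (2 * (u - x)) * (1 + 1 / r^2) * D 1 (x + r^2 * (u - x))
           + U0 x u * (1 - r^2) * D 2 (x + r^2 * (u - x))) (at r)"
proof -
  define k where "k = U0 x u / (2 * (u - x))"
  define a where "a r = x + r^2 * (u - x)" for r
  have a_in: "a r \<in> {0<..<1}"
    unfolding a_def using r sq_interp_in_unit_interval[OF x, of u r] x xu by auto
  have "(a has_real_derivative 2 * r * (u - x)) (at r)"
    unfolding a_def by (auto intro!: derivative_eq_intros)
  from DERIV_chain2[OF has_real_derivative_D[OF a_in, of 1, unfolded Suc_1] this]
  have "((\<lambda>r. k * (1 / r - r) * D 1 (a r)) has_real_derivative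
      k * (- 1 / r^2 - 1) * D 1 (a r) + k * (1 / r - r) * (D 2 (a r) * (2 * r * (u - x)))) (at r)"
    using r by (auto intro!: derivative_eq_intros simp: power2_eq_square)
  moreover have "k * (1 / r - r) * (2 * r * (u - x)) = U0 x u * (1 - r^2)"
    unfolding k_def using xu r by (simp add: field_simps power2_eq_square)
  then have "k * (1 / r - r) * (D 2 (a r) * (2 * r * (u - x))) = U0 x u * (1 - r^2) * D 2 (a r)"
    by (metis mult.assoc mult.commute)
  moreover have "k * (- 1 / r^2 - 1) * D 1 (a r) = - k * (1 + 1 / r^2) * D 1 (a r)"
    by (simp add: algebra_simps)
  ultimately show ?thesis unfolding k_def a_def by simp
qed

lemma integral_by_parts_tail:
  assumes x: "x \<in> {0<..<1}" and xu: "x < u" "u < 1" and \<rho>: "0 < \<rho>" "\<rho> \<le> 1"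
  shows "integral {\<rho>..1} (\<lambda>r. U0 x u * (1 - r^2) * D 2 (x + r^2 * (u - x)) - 4/3 * D 1 (x + r^2 * (u - x)))
    = - U0 x u / (2 * (u - x)) * (1 / \<rho> - \<rho>) * D 1 (x + \<rho>^2 * (u - x))
      + integral {\<rho>..1} (\<lambda>r. tail_weight x u r * - D 1 (x + r^2 * (u - x)))"
proof -
  define k where "k = U0 x u / (2 * (u - x))"
  define a where "a r = x + r^2 * (u - x)" for r
  define B where "B r = k * (1 / r - r) * D 1 (a r)" for r
  define B' where "B' r = - k * (1 + 1 / r^2) * D 1 (a r) + U0 x u * (1 - r^2) * D 2 (a r)" for r
  have u: "u \<in> {0<..<1}" using x xu by auto
  have "(B' has_integral (B 1 - B \<rho>)) {\<rho>..1}"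
    using \<rho> has_real_derivative_boundary_term[OF x xu] unfolding B_def B'_def k_def a_def
    by (intro has_integral_real_antiderivative) auto
  moreover have "((\<lambda>r. tail_weight x u r * - D 1 (a r)) has_integral
                   integral {\<rho>..1} (\<lambda>r. tail_weight x u r * - D 1 (a r))) {\<rho>..1}"
    unfolding a_def using continuous_on_weighted_tail[OF x u _ continuous_on_tail_weight] \<rho> xu
    by (intro integrable_integral integrable_continuous_interval) auto
  ultimately have "((\<lambda>r. B' r + tail_weight x u r * - D 1 (a r)) has_integral
     (B 1 - B \<rho> + integral {\<rho>..1} (\<lambda>r. tail_weight x u r * - D 1 (a r)))) {\<rho>..1}"
    by (rule has_integral_add)
  moreover have "B' r + tail_weight x u r * - D 1 (a r) = U0 x u * (1 - r^2) * D 2 (a r) - 4/3 * D 1 (a r)" for r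
  proof -
    have tw: "tail_weight x u r = 4/3 - k * (1 + 1 / r^2)"
      unfolding tail_weight_def k_def ..
    show ?thesis
      unfolding B'_def tw by (simp add: algebra_simps)
  qed
  ultimately show ?thesis
    unfolding B_def k_def a_def by (simp add: integral_unique)
qed

lemma tail_integral_ge:
  assumes x: "x \<in> {0<..<1}" and xu: "x < u" "u < 1" and \<rho>: "0 \<le> \<rho>" "\<rho> \<le> 1"
  shows "(f (x + \<rho>^2 * (u - x)) - f u) / 2 \<le> integral {\<rho>..1} (\<lambda>r. - D 1 (x + r^2 * (u - x)))"
proof -
  define a where "a r = x + r^2 * (u - x)" for r
  have a_in: "a r \<in> {0<..<1}" if "r \<in> {\<rho>..1}" for r
    unfolding a_def using sq_interp_in_unit_interval[OF x, of u r] x xu \<rho> that by auto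
  have "((\<lambda>r. D 1 (a r) * (2 * r * (u - x))) has_integral (f (a 1) - f (a \<rho>))) {\<rho>..1}"
  proof (rule has_integral_real_antiderivative)
    fix r assume "r \<in> {\<rho>..1}"
    have "(a has_real_derivative 2 * r * (u - x)) (at r)"
      unfolding a_def by (auto intro!: derivative_eq_intros)
    from DERIV_chain2[OF has_real_derivative_D[OF a_in[OF \<open>r \<in> {\<rho>..1}\<close>], of 0] this]
    show "((\<lambda>r. f (a r)) has_real_derivative D 1 (a r) * (2 * r * (u - x))) (at r)" by simp
  qed (use \<rho> in simp)
  from has_integral_mult_right[OF this, of "- 1 / 2"]
  have "((\<lambda>r. r * (u - x) * - D 1 (a r)) has_integral (f (a \<rho>) - f u) / 2) {\<rho>..1}"
    by (simp add: a_def algebra_simps diff_divide_distrib)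
  moreover have "((\<lambda>r. - D 1 (a r)) has_integral integral {\<rho>..1} (\<lambda>r. - D 1 (a r))) {\<rho>..1}"
    unfolding a_def using continuous_on_weighted_tail[where w="\<lambda>_. 1", OF x _ _ continuous_on_const] \<rho> xu x
    by (intro integrable_integral integrable_continuous_interval) auto
  ultimately have "(f (a \<rho>) - f u) / 2 \<le> integral {\<rho>..1} (\<lambda>r. - D 1 (a r))"
  proof (rule has_integral_le)
    fix r assume r: "r \<in> {\<rho>..1}"
    have "0 < - D 1 (a r)" using deriv_neg a_in[OF r] by simp
    moreover have "r * (u - x) \<le> 1" using r \<rho> xu x by (auto intro: mult_le_one)
    ultimately show "r * (u - x) * - D 1 (a r) \<le> - D 1 (a r)"
      using mult_right_mono[of "r * (u - x)" 1 "- D 1 (a r)"] by simp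
  qed
  then show ?thesis unfolding a_def .
qed

lemma tail_integral_at_top:
  assumes x: "x \<in> {0<..<1}" and \<rho>: "0 < \<rho>" "\<rho> < 1"
  shows "filterlim (\<lambda>u. integral {\<rho>..1} (\<lambda>r. - D 1 (x + r^2 * (u - x)))) at_top (at_left 1)"
  unfolding filterlim_at_top
proof
  fix Z :: real
  obtain K where K: "\<And>z. z \<in> {x..x + \<rho>^2 * (1 - x)} \<Longrightarrow> norm (f z) \<le> K"
    using continuous_on_compact_bound[OF compact_Icc
        continuous_on_subset[OF continuous_on_D[of 0] head_interval_subset_unit[OF assms]]] by auto
  have "\<forall>\<^sub>F u in at_left 1. f u \<le> - K - 2 * Z"
    using tendsto_at_left_1 by (simp add: filterlim_at_bot)
  moreover have "\<forall>\<^sub>F u in at_left 1. u \<in> {x<..<1}"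
    using x by (intro eventually_at_left_real) auto
  ultimately show "\<forall>\<^sub>F u in at_left 1. Z \<le> integral {\<rho>..1} (\<lambda>r. - D 1 (x + r^2 * (u - x)))"
  proof eventually_elim
    case (elim u)
    then have "x + \<rho>^2 * (u - x) \<in> {x..x + \<rho>^2 * (1 - x)}"
      using sq_interp_bounds[of \<rho> \<rho> x u] \<rho> by auto
    then have "- K \<le> f (x + \<rho>^2 * (u - x))"
      using K by (metis abs_le_iff minus_le_iff real_norm_def)
    moreover have "(f (x + \<rho>^2 * (u - x)) - f u) / 2 \<le> integral {\<rho>..1} (\<lambda>r. - D 1 (x + r^2 * (u - x)))"
      using elim \<rho> by (intro tail_integral_ge[OF x]) auto
    ultimately show ?case
      using elim by argo
  qed
qed

lemma H_integrand_bound: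
  assumes "x \<in> {0<..<1}" "x < u" "u < 1" "r \<in> {0..1}"
    and "\<bar>D 1 (x + r^2 * (u - x))\<bar> \<le> K1" "\<bar>D 2 (x + r^2 * (u - x))\<bar> \<le> K2"
  shows "\<bar>U0 x u * (1 - r^2) * D 2 (x + r^2 * (u - x)) - 4/3 * D 1 (x + r^2 * (u - x))\<bar> \<le> 2 * K2 + 2 * K1"
proof -
  have "0 \<le> 1 - r^2" "1 - r^2 \<le> 1" using assms(4) by (auto simp: power_le_one)
  moreover have "0 < U0 x u" "U0 x u \<le> 2" using assms(1-3) by (auto simp: U0_def)
  ultimately have "0 \<le> U0 x u * (1 - r^2)" "U0 x u * (1 - r^2) \<le> U0 x u * 1"
    by (simp_all add: mult_left_mono)
  then have "\<bar>U0 x u * (1 - r^2)\<bar> \<le> 2"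
    using \<open>U0 x u \<le> 2\<close> by simp
  then have "\<bar>U0 x u * (1 - r^2) * D 2 (x + r^2 * (u - x))\<bar> \<le> 2 * K2"
    using assms(6) unfolding abs_mult[of _ "D 2 _"] by (intro mult_mono) auto
  moreover have "\<bar>4/3 * D 1 (x + r^2 * (u - x))\<bar> \<le> 2 * K1"
    using assms(5) by simp
  ultimately show ?thesis
    by (meson abs_triangle_ineq4 add_mono order_trans)
qed

lemma H_minus_tail_bounded:
  assumes x: "x \<in> {0<..<1}" and \<rho>: "0 < \<rho>" "\<rho> < 1"
  obtains C where "\<forall>\<^sub>F u in at_left 1.
    \<bar>H x u - integral {\<rho>..1} (\<lambda>r. tail_weight x u r * - D 1 (x + r^2 * (u - x)))\<bar> \<le> C"
proof -
  define c where "c = x + \<rho>^2 * (1 - x)"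
  have sub: "{x..c} \<subseteq> {0<..<1}" unfolding c_def by (rule head_interval_subset_unit[OF assms])
  obtain K1 where "0 \<le> K1" and K1: "\<And>z. z \<in> {x..c} \<Longrightarrow> norm (D 1 z) \<le> K1"
    using continuous_on_compact_bound[OF compact_Icc continuous_on_subset[OF continuous_on_D[of 1] sub]] by blast
  obtain K2 where "0 \<le> K2" and K2: "\<And>z. z \<in> {x..c} \<Longrightarrow> norm (D 2 z) \<le> K2"
    using continuous_on_compact_bound[OF compact_Icc continuous_on_subset[OF continuous_on_D[of 2] sub]] by blast
  show ?thesis
  proof (rule that)
    have "\<forall>\<^sub>F u in at_left 1. u \<in> {(1 + x) / 2<..<1}"
      using x by (intro eventually_at_left_real) auto
    then show "\<forall>\<^sub>F u in at_left 1. \<bar>H x u - integral {\<rho>..1} (\<lambda>r. tail_weight x u r * - D 1 (x + r^2 * (u - x)))\<bar>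
                 \<le> 2 * K2 + 2 * K1 + 2 / ((1 - x) * \<rho>) * K1"
    proof eventually_elim
      case (elim u)
      then have xu: "x < u" "u < 1" and u: "u \<in> {0<..<1}" using x by auto
      define h where "h r = U0 x u * (1 - r^2) * D 2 (x + r^2 * (u - x)) - 4/3 * D 1 (x + r^2 * (u - x))" for r
      have a_in: "x + r^2 * (u - x) \<in> {x..c}" if "r \<in> {0..\<rho>}" for r
        using sq_interp_bounds[of r \<rho> x u] that xu unfolding c_def by auto
      have ch: "continuous_on {0..1} h"
        unfolding h_def using continuous_on_comp_sq_interp[OF continuous_on_D x u]
        by (intro continuous_intros)
      have "H x u - integral {\<rho>..1} (\<lambda>r. tail_weight x u r * - D 1 (x + r^2 * (u - x)))
          = integral {0..\<rho>} h - U0 x u / (2 * (u - x)) * (1 / \<rho> - \<rho>) * D 1 (x + \<rho>^2 * (u - x))"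
        using H_eq_integral[OF x u] integral_by_parts_tail[OF x xu \<rho>(1)] \<rho>
          Henstock_Kurzweil_Integration.integral_combine[of 0 \<rho> 1 h] integrable_continuous_interval[OF ch]
        unfolding h_def by (simp add: algebra_simps)
      moreover have "norm (integral {0..\<rho>} h) \<le> (2 * K2 + 2 * K1) * (\<rho> - 0)"
      proof (rule integral_bound)
        fix r assume r: "r \<in> {0..\<rho>}"
        then show "norm (h r) \<le> 2 * K2 + 2 * K1"
          unfolding h_def real_norm_def using x xu \<rho> K1[OF a_in[OF r]] K2[OF a_in[OF r]]
          by (intro H_integrand_bound) auto
      qed (use \<rho> ch in \<open>auto intro: continuous_on_subset\<close>)
      moreover have "\<bar>U0 x u / (2 * (u - x)) * (1 / \<rho> - \<rho>) * D 1 (x + \<rho>^2 * (u - x))\<bar> \<le> 2 / ((1 - x) * \<rho>) * K1"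
        using boundary_coeff_bound[of x u \<rho>] K1[OF a_in[of \<rho>]] x elim \<rho>
        unfolding abs_mult[of _ "D 1 _"] by (intro mult_mono) auto
      moreover have "(2 * K2 + 2 * K1) * (\<rho> - 0) \<le> 2 * K2 + 2 * K1"
        using \<rho> \<open>0 \<le> K1\<close> \<open>0 \<le> K2\<close> by (simp add: mult_left_le)
      ultimately show ?case
        by (smt (verit) abs_triangle_ineq4 real_norm_def)
    qed
  qed
qed

lemma H_at_top_if_tail_weight_ge:
  assumes x: "x \<in> {0<..<1}" and \<rho>: "0 < \<rho>" "\<rho> < 1" and \<eta>: "0 < \<eta>"
    and w: "\<forall>\<^sub>F u in at_left 1. \<forall>r\<in>{\<rho>..1}. \<eta> \<le> tail_weight x u r"
  shows "filterlim (\<lambda>u. H x u) at_top (at_left 1)"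
  unfolding filterlim_at_top
proof
  fix Z :: real
  obtain C where C: "\<forall>\<^sub>F u in at_left 1.
      \<bar>H x u - integral {\<rho>..1} (\<lambda>r. tail_weight x u r * - D 1 (x + r^2 * (u - x)))\<bar> \<le> C"
    using H_minus_tail_bounded[OF x \<rho>] .
  have "\<forall>\<^sub>F u in at_left 1. (Z + C) / \<eta> \<le> integral {\<rho>..1} (\<lambda>r. - D 1 (x + r^2 * (u - x)))"
    using tail_integral_at_top[OF x \<rho>] by (simp add: filterlim_at_top)
  moreover have "\<forall>\<^sub>F u in at_left 1. u \<in> {x<..<1}"
    using x by (intro eventually_at_left_real) auto
  ultimately show "\<forall>\<^sub>F u in at_left 1. Z \<le> H x u"
    using C w
  proof eventually_elim
    case (elim u)
    then have u: "u \<in> {0<..<1}" and "x \<noteq> u" using x by auto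
    have "\<eta> * integral {\<rho>..1} (\<lambda>r. - D 1 (x + r^2 * (u - x)))
            \<le> integral {\<rho>..1} (\<lambda>r. tail_weight x u r * - D 1 (x + r^2 * (u - x)))"
      using integral_tail_weight_mono[where v="\<lambda>_. \<eta>" and w="tail_weight x u",
          OF x u _ continuous_on_const continuous_on_tail_weight] elim \<open>x \<noteq> u\<close> \<rho> by simp
    moreover have "Z + C \<le> \<eta> * integral {\<rho>..1} (\<lambda>r. - D 1 (x + r^2 * (u - x)))"
      using elim \<eta> by (simp add: field_simps)
    ultimately show ?case using elim by linarith
  qed
qed

lemma H_at_bot_if_tail_weight_le:
  assumes x: "x \<in> {0<..<1}" and \<rho>: "0 < \<rho>" "\<rho> < 1" and \<eta>: "0 < \<eta>"
    and w: "\<forall>\<^sub>F u in at_left 1. \<forall>r\<in>{\<rho>..1}. tail_weight x u r \<le> - \<eta>"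
  shows "filterlim (\<lambda>u. H x u) at_bot (at_left 1)"
  unfolding filterlim_at_bot
proof
  fix Z :: real
  obtain C where C: "\<forall>\<^sub>F u in at_left 1.
      \<bar>H x u - integral {\<rho>..1} (\<lambda>r. tail_weight x u r * - D 1 (x + r^2 * (u - x)))\<bar> \<le> C"
    using H_minus_tail_bounded[OF x \<rho>] .
  have "\<forall>\<^sub>F u in at_left 1. (C - Z) / \<eta> \<le> integral {\<rho>..1} (\<lambda>r. - D 1 (x + r^2 * (u - x)))"
    using tail_integral_at_top[OF x \<rho>] by (simp add: filterlim_at_top)
  moreover have "\<forall>\<^sub>F u in at_left 1. u \<in> {x<..<1}"
    using x by (intro eventually_at_left_real) auto
  ultimately show "\<forall>\<^sub>F u in at_left 1. H x u \<le> Z"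
    using C w
  proof eventually_elim
    case (elim u)
    then have u: "u \<in> {0<..<1}" and "x \<noteq> u" using x by auto
    have "integral {\<rho>..1} (\<lambda>r. tail_weight x u r * - D 1 (x + r^2 * (u - x)))
            \<le> - \<eta> * integral {\<rho>..1} (\<lambda>r. - D 1 (x + r^2 * (u - x)))"
      using integral_tail_weight_mono[where v="tail_weight x u" and w="\<lambda>_. - \<eta>",
          OF x u _ continuous_on_tail_weight continuous_on_const] elim \<open>x \<noteq> u\<close> \<rho> by simp
    moreover have "C - Z \<le> \<eta> * integral {\<rho>..1} (\<lambda>r. - D 1 (x + r^2 * (u - x)))"
      using elim \<eta> by (simp add: field_simps)
    ultimately show ?case using elim by linarith
  qed
qed

lemma H_at_top_below_quarter:
  assumes x: "0 < x" "x < 1/4"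
  shows "filterlim (\<lambda>u. H x u) at_top (at_left 1)"
proof -
  define k where "k = (4 * x + 2) / (6 * (1 - x))"
  have k: "0 < k" "k < 2/3" unfolding k_def using x by (auto simp: field_simps)
  define L where "L = (2 + 4 / (3 * k)) / 2"
  have L: "2 < L" "k * L < 4/3" unfolding L_def using k by (auto simp: field_simps)
  define \<rho> where "\<rho> = 1 / sqrt (L - 1)"
  have \<rho>: "0 < \<rho>" "\<rho> < 1" "1 / \<rho>^2 = L - 1"
    unfolding \<rho>_def using L by (auto simp: power_one_over)
  define \<eta> where "\<eta> = (4/3 - k * L) / 2"
  have \<eta>: "0 < \<eta>" "k * L < 4/3 - \<eta>" unfolding \<eta>_def using L(2) by argo+
  have "\<forall>\<^sub>F u in at_left 1. U0 x u / (2 * (u - x)) * L < 4/3 - \<eta>"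
    using x \<eta>(2) unfolding k_def by (intro order_tendstoD(2)[OF tendsto_mult_right[OF tendsto_U0_div]]) auto
  moreover have "\<forall>\<^sub>F u in at_left 1. u \<in> {x<..<1}"
    using x by (intro eventually_at_left_real) auto
  ultimately have "\<forall>\<^sub>F u in at_left 1. \<forall>r\<in>{\<rho>..1}. \<eta> \<le> tail_weight x u r"
  proof eventually_elim
    case (elim u)
    show ?case
    proof
      fix r assume r: "r \<in> {\<rho>..1}"
      have "1 / r^2 \<le> 1 / \<rho>^2" using r \<rho> by (intro divide_left_mono power_mono) auto
      moreover have "0 \<le> U0 x u / (2 * (u - x))" using elim x by (simp add: U0_def)
      ultimately have "U0 x u / (2 * (u - x)) * (1 + 1 / r^2) \<le> U0 x u / (2 * (u - x)) * L"
        using \<rho>(3) by (intro mult_left_mono) auto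
      then show "\<eta> \<le> tail_weight x u r" unfolding tail_weight_def using elim by argo
    qed
  qed
  then show ?thesis using H_at_top_if_tail_weight_ge[OF _ \<rho>(1,2) \<eta>(1)] x by simp
qed

lemma H_at_bot_above_quarter:
  assumes x: "1/4 < x" "x < 1"
  shows "filterlim (\<lambda>u. H x u) at_bot (at_left 1)"
proof -
  define k where "k = (4 * x + 2) / (6 * (1 - x))"
  have k: "2/3 < k" unfolding k_def using x by (auto simp: field_simps)
  define \<eta> where "\<eta> = k - 2/3"
  have \<eta>: "0 < \<eta>" "(4/3 + \<eta>) / 2 < k" unfolding \<eta>_def using k by auto
  have "\<forall>\<^sub>F u in at_left 1. (4/3 + \<eta>) / 2 < U0 x u / (2 * (u - x))"
    using x \<eta>(2) unfolding k_def by (intro order_tendstoD(1)[OF tendsto_U0_div]) auto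
  moreover have "\<forall>\<^sub>F u in at_left 1. u \<in> {x<..<1}"
    using x by (intro eventually_at_left_real) auto
  ultimately have "\<forall>\<^sub>F u in at_left 1. \<forall>r\<in>{1/2..1}. tail_weight x u r \<le> - \<eta>"
  proof eventually_elim
    case (elim u)
    show ?case
    proof
      fix r :: real assume r: "r \<in> {1/2..1}"
      define q where "q = U0 x u / (2 * (u - x))"
      have "1 \<le> 1 / r^2" using r by (simp add: power_le_one)
      moreover have "0 \<le> q" using elim x by (simp add: q_def U0_def)
      ultimately have "q * 2 \<le> q * (1 + 1 / r^2)"
        by (intro mult_left_mono) auto
      then show "tail_weight x u r \<le> - \<eta>"
        using elim unfolding tail_weight_def q_def[symmetric] by argo
    qed
  qed
  then show ?thesis using H_at_bot_if_tail_weight_le[of x "1/2" \<eta>] x \<eta>(1) by simp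
qed

section \<open>The unique zero of H\<close>

lemma H_strict_antimono:
  assumes u: "u \<in> {0<..<1}" and I2: "\<forall>x\<in>{0<..<1}. I 2 x u < 0" and ab: "0 < a" "a < b" "b < 1"
  shows "H b u < H a u"
proof (rule DERIV_neg_imp_decreasing[OF ab(2)])
  fix x assume "a \<le> x" "x \<le> b"
  then have x: "x \<in> {0<..<1}" using ab by auto
  show "\<exists>y. ((\<lambda>x. H x u) has_real_derivative y) (at x) \<and> y < 0"
    using has_real_derivative_H[OF x u] I2 x U0_pos[OF x u] by (auto simp: mult_pos_neg)
qed

definition zero_of_H :: "real \<Rightarrow> real" where
  "zero_of_H u = (SOME \<xi>. \<xi> \<in> {0<..<1} \<and> H \<xi> u = 0)"

lemma eventually_zero_of_H:
  assumes \<epsilon>: "0 < \<epsilon>" "\<epsilon> < 1/4"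
  shows "\<forall>\<^sub>F u in at_left 1. u \<in> {0<..<1} \<and> zero_of_H u \<in> {1/4 - \<epsilon>..1/4 + \<epsilon>} \<and> H (zero_of_H u) u = 0
           \<and> (\<forall>\<xi>\<in>{0<..<1}. H \<xi> u = 0 \<longrightarrow> \<xi> = zero_of_H u)"
proof -
  have "\<forall>\<^sub>F u in at_left 1. 0 < H (1/4 - \<epsilon>) u"
    using H_at_top_below_quarter[of "1/4 - \<epsilon>"] \<epsilon> by (auto simp: filterlim_at_top_dense)
  moreover have "\<forall>\<^sub>F u in at_left 1. H (1/4 + \<epsilon>) u < 0"
    using H_at_bot_above_quarter[of "1/4 + \<epsilon>"] \<epsilon> by (auto simp: filterlim_at_bot_dense)
  moreover have "\<forall>\<^sub>F u in at_left 1. u \<in> {0<..<1::real}"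
    by (intro eventually_at_left_real) auto
  ultimately show ?thesis
    using I2_eventually_neg
  proof eventually_elim
    case (elim u)
    have "isCont (\<lambda>x. H x u) x" if "x \<in> {1/4 - \<epsilon>..1/4 + \<epsilon>}" for x
      using has_real_derivative_H[of x u] elim that \<epsilon> by (auto intro: DERIV_isCont)
    then have "continuous_on {1/4 - \<epsilon>..1/4 + \<epsilon>} (\<lambda>x. H x u)"
      by (intro continuous_at_imp_continuous_on ballI)
    then obtain z where z: "1/4 - \<epsilon> \<le> z" "z \<le> 1/4 + \<epsilon>" "H z u = 0"
      using IVT2'[of "\<lambda>x. H x u" "1/4 + \<epsilon>" 0 "1/4 - \<epsilon>"] elim \<epsilon> by auto
    have unique: "\<xi> = z" if "\<xi> \<in> {0<..<1}" "H \<xi> u = 0" for \<xi>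
    proof (rule ccontr)
      assume "\<xi> \<noteq> z"
      then consider "\<xi> < z" | "z < \<xi>" by linarith
      then show False
        using H_strict_antimono[of u \<xi> z] H_strict_antimono[of u z \<xi>] elim that z \<epsilon> by cases auto
    qed
    have "zero_of_H u \<in> {0<..<1} \<and> H (zero_of_H u) u = 0"
      unfolding zero_of_H_def by (rule someI[of _ z]) (use z \<epsilon> in auto)
    then have "zero_of_H u = z" using unique by blast
    then show ?case using elim z unique by auto
  qed
qed

lemma eventually_zero_of_H_critical_point:
  "\<forall>\<^sub>F u1 in at_left 1.
     zero_of_H u1 \<in> {0<..<1} \<and>
     ((\<lambda>\<xi>. - F0 f \<xi> u1 / U0 \<xi> u1) has_real_derivative 0) (at (zero_of_H u1)) \<and>
     (\<forall>\<xi>\<in>{0<..<1}. ((\<lambda>\<xi>. - F0 f \<xi> u1 / U0 \<xi> u1) has_real_derivative 0) (at \<xi>)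
        \<longrightarrow> \<xi> = zero_of_H u1)"
proof -
  have "\<forall>\<^sub>F u in at_left 1. u \<in> {0<..<1} \<and> zero_of_H u \<in> {1/8..3/8} \<and> H (zero_of_H u) u = 0
           \<and> (\<forall>\<xi>\<in>{0<..<1}. H \<xi> u = 0 \<longrightarrow> \<xi> = zero_of_H u)"
    using eventually_zero_of_H[of "1/8"] by simp
  then show ?thesis
  proof eventually_elim
    case (elim u)
    then have "zero_of_H u \<in> {0<..<1}" by auto
    with elim show ?case using critical_point_iff_H_zero by auto
  qed
qed

lemma tendsto_zero_of_H: "(zero_of_H \<longlongrightarrow> 1/4) (at_left 1)"
proof (rule tendstoI)
  fix e :: real assume "0 < e"
  then have \<epsilon>: "0 < min (e/2) (1/8)" "min (e/2) (1/8) < (1/4::real)" "min (e/2) (1/8) < e"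
    by auto
  from eventually_zero_of_H[OF \<epsilon>(1,2)]
  show "\<forall>\<^sub>F u in at_left 1. dist (zero_of_H u) (1/4) < e"
    by eventually_elim (use \<epsilon>(3) in \<open>auto simp: dist_real_def\<close>)
qed

end

theorem lemma4p3:
  fixes u0 f :: "real \<Rightarrow> real"
  assumes u0_smooth: "smooth_on UNIV u0"
    and u0_decr: "\<And>x y. x < y \<Longrightarrow> u0 y < u0 x"
    and u0_range: "\<And>x. 0 < u0 x \<and> u0 x < 1"
    and u0_lim_bot: "(u0 \<longlongrightarrow> 1) at_bot"
    and u0_lim_top: "(u0 \<longlongrightarrow> 0) at_top"
    and f_inv1: "\<And>x. f (u0 x) = x"
    and f_inv2: "\<And>u. 0 < u \<Longrightarrow> u < 1 \<Longrightarrow> u0 (f u) = u"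
    and f_smooth: "smooth_on {0<..<1} f"
    and f_deriv_neg: "\<And>u. 0 < u \<Longrightarrow> u < 1 \<Longrightarrow> deriv f u < 0"
    and f_lim0: "filterlim f at_top (at_right 0)"
    and f_lim1: "filterlim f at_bot (at_left 1)"
    and f3_near0: "\<exists>\<delta>>0. \<forall>u. 0 < u \<and> u < \<delta> \<longrightarrow> (deriv ^^ 3) f u < 0"
    and f3_near1: "\<exists>\<delta>>0. \<forall>u. 1 - \<delta> < u \<and> u < 1 \<longrightarrow> (deriv ^^ 3) f u < 0"
  shows "\<exists>c :: real \<Rightarrow> real.
           (\<forall>\<^sub>F u1 in at_left 1.
              c u1 \<in> {0<..<1} \<and>
              ((\<lambda>\<xi>. - F0 f \<xi> u1 / U0 \<xi> u1) has_real_derivative 0) (at (c u1)) \<and>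
              (\<forall>\<xi>\<in>{0<..<1}. ((\<lambda>\<xi>. - F0 f \<xi> u1 / U0 \<xi> u1) has_real_derivative 0) (at \<xi>)
                 \<longrightarrow> \<xi> = c u1)) \<and>
           (c \<longlongrightarrow> 1/4) (at_left 1)"
proof -
  interpret inverse_profile f
    using f_smooth f_deriv_neg f_lim1 f3_near0 f3_near1 by unfold_locales
  show ?thesis
    using eventually_zero_of_H_critical_point tendsto_zero_of_H by blast
qed

end
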